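(* Let $A:\mathbb{R}\to M_{n\times n}(\mathbb{R})$ and $P:\mathbb{R}\to M_{n\times n}(\mathbb{R})$ be continuous. Suppose the linear system $\dot x=A(t)x$ has non-uniform bounded growth with constants $K_0>0$, $a>0$, $\varepsilon>0$, i.e. $\|\Phi_A(t,\tau)\|\le K_0e^{\varepsilon|\tau|}e^{a|t-\tau|}$ for all $t,\tau\in\mathbb{R}$. Assume there exist $\mathcal{P}>0$ and $p>0$ such that $\|P(t)\|\le \mathcal{P}e^{-p|t|}$ for all $t\in\mathbb{R}$, and that $p>\varepsilon$. Then the perturbed system $\dot x=(A(t)+P(t))x$ has non-uniform bounded growth with constants $K_0$, $a+K_0\mathcal{P}$ and $\varepsilon$, i.e. its transition matrix $\tilde\Phi$ satisfies $\|\tilde\Phi(t_2,t_1)\|\le K_0e^{(a+K_0\mathcal{P})|t_2-t_1|+\varepsilon|t_1|}$ for all $t_1,t_2\in\mathbb{R}$.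
   Context: For a continuous matrix function $V:\mathbb{R}\to M_{n\times n}(\mathbb{R})$, $\Phi_V(t,s)$ denotes the transition matrix of $\dot x=V(t)x$ (so $x(t)=\Phi_V(t,s)x(s)$). The system $\dot x=V(t)x$ has non-uniform bounded growth on $\mathbb{R}$ with constants $K_0>0$, $a>0$, $\eta>0$ if $\|\Phi_V(t,\tau)\|\le K_0e^{\eta|\tau|}e^{a|t-\tau|}$ for all $t,\tau\in\mathbb{R}$. $\|\cdot\|$ is the Euclidean operator norm. *)

theory Defs
  imports "HOL-Analysis.Analysis"
begin

definition opnorm :: "real^'n^'n \<Rightarrow> real" where
  "opnorm M = onorm (\<lambda>x. M *v x)"

text \<open>Phi is the transition matrix of x' = V(t) x:
  Phi(s,s) = I and t \<mapsto> Phi(t,s) solves the matrix equation X' = V(t) X.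
  (For continuous V this determines Phi uniquely.)\<close>
definition is_transition_matrix ::
  "(real \<Rightarrow> real^'n^'n) \<Rightarrow> (real \<Rightarrow> real \<Rightarrow> real^'n^'n) \<Rightarrow> bool" where
  "is_transition_matrix V Phi \<longleftrightarrow>
     (\<forall>s. Phi s s = mat 1) \<and>
     (\<forall>t s. ((\<lambda>u. Phi u s) has_vector_derivative (V t ** Phi t s)) (at t))"

definition nonuniform_bounded_growth ::
  "(real \<Rightarrow> real \<Rightarrow> real^'n^'n) \<Rightarrow> real \<Rightarrow> real \<Rightarrow> real \<Rightarrow> bool" where
  "nonuniform_bounded_growth Phi K0 a eta \<longleftrightarrow>
     (\<forall>t \<tau>. opnorm (Phi t \<tau>) \<le> K0 * exp (eta * \<bar>\<tau>\<bar>) * exp (a * \<bar>t - \<tau>\<bar>))"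

end

(* By variation of constants,
     PhiT(t,s) = PhiA(t,s) + integral over [s,t] of PhiA(t,r) P(r) PhiT(r,s) dr.
   For s <= r <= t the kernel obeys ||PhiA(t,r) P(r)|| <= K0 PP e^(a(t-r)) e^((eps-p)|r|)
   <= K0 PP e^(a(t-r)): the decay of P absorbs the non-uniform factor e^(eps|r|). Hence
   u(t) = e^(-a(t-s)) ||PhiT(t,s)|| satisfies u(t) <= K0 e^(eps|s|) + K0 PP int_s^t u, and
   Gronwall's inequality gives the bound for t >= s; the case t < s follows by reversing time.
   Variation of constants needs the derivative of PhiA in its initial time, which the definition
   of a transition matrix does not provide. It comes from the cocycle identity
   PhiA(t,s) PhiA(s,r) = PhiA(t,r), i.e. from uniqueness of solutions, which in turn follows from
   the differential form of Gronwall's inequality. *)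

theory Submission
  imports Defs
begin

section \<open>Matrix products and the operator norm\<close>

lemma bounded_bilinear_matrix_matrix_mult:
  "bounded_bilinear ((**) :: real^'n^'m \<Rightarrow> real^'k^'n \<Rightarrow> real^'k^'m)"
proof -
  have "bilinear ((**) :: real^'n^'m \<Rightarrow> real^'k^'n \<Rightarrow> real^'k^'m)"
    unfolding bilinear_def
    by (auto intro!: linearI simp: matrix_matrix_mult_def vec_eq_iff sum.distrib
        distrib_left distrib_right sum_distrib_left mult_ac)
  then show ?thesis
    by (simp add: bilinear_conv_bounded_bilinear)
qed

lemma bounded_bilinear_matrix_vector_mult:
  "bounded_bilinear ((*v) :: real^'n^'m \<Rightarrow> real^'n \<Rightarrow> real^'m)"
proof -
  have "bilinear ((*v) :: real^'n^'m \<Rightarrow> real^'n \<Rightarrow> real^'m)"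
    unfolding bilinear_def
    by (auto intro!: linearI simp: matrix_vector_right_distrib matrix_vector_mult_add_rdistrib
        matrix_scaleR_vector_ac scaleR_matrix_vector_assoc)
  then show ?thesis
    by (simp add: bilinear_conv_bounded_bilinear)
qed

lemma norm_matrix_vector_mult_le_opnorm: "norm ((M::real^'n^'n) *v x) \<le> opnorm M * norm x"
  unfolding opnorm_def by (rule onorm[OF matrix_vector_mul_bounded_linear])

lemma opnorm_nonneg: "0 \<le> opnorm (M::real^'n^'n)"
  unfolding opnorm_def by (rule onorm_pos_le[OF matrix_vector_mul_bounded_linear])

lemma opnorm_le: "(\<And>x. norm ((M::real^'n^'n) *v x) \<le> b * norm x) \<Longrightarrow> opnorm M \<le> b"
  unfolding opnorm_def by (rule onorm_le)

lemma opnorm_matrix_mult_le: "opnorm ((M::real^'n^'n) ** N) \<le> opnorm M * opnorm N"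
  unfolding opnorm_def matrix_vector_mul_assoc[symmetric]
  using onorm_compose[OF matrix_vector_mul_bounded_linear matrix_vector_mul_bounded_linear]
  by (simp add: o_def)

lemma opnorm_triangle: "opnorm ((M::real^'n^'n) + N) \<le> opnorm M + opnorm N"
  unfolding opnorm_def matrix_vector_mult_add_rdistrib
  by (rule onorm_triangle[OF matrix_vector_mul_bounded_linear matrix_vector_mul_bounded_linear])

lemma opnorm_minus: "opnorm (- (M::real^'n^'n)) = opnorm M"
proof -
  have "(\<lambda>x. (- M) *v x) = (\<lambda>x. - (M *v x))"
    by (simp add: bounded_bilinear.minus_left[OF bounded_bilinear_matrix_vector_mult])
  then show ?thesis
    unfolding opnorm_def by (simp add: onorm_neg)
qed

lemma continuous_on_opnorm:
  assumes "continuous_on S f"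
  shows "continuous_on S (\<lambda>x. opnorm (f x :: real^'n^'n))"
proof -
  obtain K where K: "\<And>M x. norm ((M::real^'n^'n) *v x) \<le> norm M * norm x * K" and "0 \<le> K"
    using bounded_bilinear.nonneg_bounded[OF bounded_bilinear_matrix_vector_mult] by blast
  have opnorm_le_norm: "opnorm M \<le> K * norm M" for M :: "real^'n^'n"
    by (rule opnorm_le) (use K in \<open>simp add: ac_simps\<close>)
  have "\<bar>opnorm M - opnorm N\<bar> \<le> K * norm (M - N)" for M N :: "real^'n^'n"
    using opnorm_triangle[of N "M - N"] opnorm_triangle[of M "N - M"]
      opnorm_le_norm[of "M - N"] opnorm_le_norm[of "N - M"] norm_minus_commute[of M N]
    by auto
  then have "K-lipschitz_on UNIV (opnorm :: real^'n^'n \<Rightarrow> real)"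
    by (intro lipschitz_onI \<open>0 \<le> K\<close>) (simp add: dist_norm)
  then have "continuous_on UNIV (opnorm :: real^'n^'n \<Rightarrow> real)"
    by (rule lipschitz_on_continuous_on)
  then show ?thesis
    using continuous_on_compose2[OF _ assms] by blast
qed

lemma opnorm_integral_le:
  fixes F :: "real \<Rightarrow> real^'n^'n"
  assumes F: "(F has_integral I) S" and g: "g integrable_on S"
    and bound: "\<And>r. r \<in> S \<Longrightarrow> opnorm (F r) \<le> g r"
  shows "opnorm I \<le> integral S g"
proof (rule opnorm_le)
  fix x :: "real^'n"
  have "((\<lambda>r. F r *v x) has_integral I *v x) S"
    using has_integral_linear[OF F bounded_bilinear.bounded_linear_left[OF
          bounded_bilinear_matrix_vector_mult]]
    by (simp add: o_def)
  then have "norm (I *v x) = norm (integral S (\<lambda>r. F r *v x))"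
    by (simp add: integral_unique)
  also have "\<dots> \<le> integral S (\<lambda>r. g r * norm x)"
  proof (rule integral_norm_bound_integral)
    show "(\<lambda>r. F r *v x) integrable_on S"
      using \<open>((\<lambda>r. F r *v x) has_integral I *v x) S\<close> by blast
    show "(\<lambda>r. g r * norm x) integrable_on S"
      using g by (rule integrable_on_mult_left)
    show "norm (F r *v x) \<le> g r * norm x" if "r \<in> S" for r
      using norm_matrix_vector_mult_le_opnorm[of "F r" x] mult_right_mono[OF bound[OF that] norm_ge_zero[of x]]
      by linarith
  qed
  finally show "norm (I *v x) \<le> integral S g * norm x"
    by simp
qed

lemma matrix_mult_bound_on_compact:
  fixes V :: "'a::topological_space \<Rightarrow> real^'n^'m"
  assumes "continuous_on S V" "compact S"
  obtains L where "0 \<le> L" "\<And>u X. u \<in> S \<Longrightarrow> norm (V u ** X) \<le> L * norm (X :: real^'k^'n)"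
proof -
  obtain B where B: "\<And>u. u \<in> S \<Longrightarrow> norm (V u) \<le> B" "0 \<le> B"
    using compact_imp_bounded[OF compact_continuous_image[OF assms]]
    by (auto simp: bounded_pos intro: less_imp_le)
  obtain K where K: "\<And>M X. norm ((M :: real^'n^'m) ** (X :: real^'k^'n)) \<le> norm M * norm X * K"
    and "0 \<le> K"
    using bounded_bilinear.nonneg_bounded[OF bounded_bilinear_matrix_matrix_mult] by blast
  show ?thesis
  proof
    show "0 \<le> B * K"
      using B(2) \<open>0 \<le> K\<close> by simp
    show "norm (V u ** X) \<le> B * K * norm X" if "u \<in> S" for u and X :: "real^'k^'n"
      using K[of "V u" X] mult_right_mono[OF B(1)[OF that], of "norm X * K"] \<open>0 \<le> K\<close>
      by (simp add: ac_simps)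
  qed
qed

lemma has_vector_derivative_iff_tendsto_quotient:
  fixes f :: "real \<Rightarrow> 'a::real_normed_vector"
  shows "(f has_vector_derivative D) (at x) \<longleftrightarrow> ((\<lambda>y. (f y - f x) /\<^sub>R (y - x)) \<longlongrightarrow> D) (at x)"
proof -
  have quotient: "norm (f y - f x - (y - x) *\<^sub>R D) / norm (y - x) = norm ((f y - f x) /\<^sub>R (y - x) - D)"
    if "y \<noteq> x" for y
  proof -
    have "f y - f x - (y - x) *\<^sub>R D = (y - x) *\<^sub>R ((f y - f x) /\<^sub>R (y - x) - D)"
      using that by (simp add: scaleR_right_diff_distrib)
    then show ?thesis
      using that by simp
  qed
  have "(f has_vector_derivative D) (at x) \<longleftrightarrow>
      ((\<lambda>y. norm (f y - f x - (y - x) *\<^sub>R D) / norm (y - x)) \<longlongrightarrow> 0) (at x)"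
    by (simp add: has_vector_derivative_def has_derivative_iff_norm bounded_linear_scaleR_left)
  also have "\<dots> \<longleftrightarrow> ((\<lambda>y. norm ((f y - f x) /\<^sub>R (y - x) - D)) \<longlongrightarrow> 0) (at x)"
    using quotient by (intro filterlim_cong) (auto simp: eventually_at_filter)
  also have "\<dots> \<longleftrightarrow> ((\<lambda>y. (f y - f x) /\<^sub>R (y - x)) \<longlongrightarrow> D) (at x)"
    by (simp add: tendsto_norm_zero_iff LIM_zero_iff)
  finally show ?thesis .
qed

lemma has_vector_derivative_left_factor:
  fixes G :: "real \<Rightarrow> real^'n^'m" and E :: "real \<Rightarrow> real^'n^'n"
  assumes const: "\<And>s. G s ** E s = G r" and "E r = mat 1"
    and E: "(E has_vector_derivative D) (at r)" and "Bfun G (at r)"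
  shows "(G has_vector_derivative - (G r ** D)) (at r)"
proof -
  interpret mm: bounded_bilinear "(**) :: real^'n^'m \<Rightarrow> real^'n^'n \<Rightarrow> real^'n^'m"
    by (rule bounded_bilinear_matrix_matrix_mult)
  have diff: "G s ** (E s - E r) = G r - G s" for s
    using const[of s] \<open>E r = mat 1\<close> by (simp add: mm.diff_right)
  have "((\<lambda>s. E s - E r) \<longlongrightarrow> 0) (at r)"
    using has_vector_derivative_continuous[OF E] by (simp add: continuous_at LIM_zero)
  then have "((\<lambda>s. G r - G s) \<longlongrightarrow> 0) (at r)"
    using mm.Bfun_prod_Zfun[OF \<open>Bfun G (at r)\<close>, of "\<lambda>s. E s - E r"]
    by (simp add: tendsto_Zfun_iff diff)
  from tendsto_diff[OF tendsto_const[of "G r"] this]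
  have "(G \<longlongrightarrow> G r) (at r)"
    by simp
  moreover have "((\<lambda>s. (E s - E r) /\<^sub>R (s - r)) \<longlongrightarrow> D) (at r)"
    using E by (simp add: has_vector_derivative_iff_tendsto_quotient)
  ultimately have "((\<lambda>s. - (G s ** ((E s - E r) /\<^sub>R (s - r)))) \<longlongrightarrow> - (G r ** D)) (at r)"
    by (intro tendsto_minus mm.tendsto)
  moreover have "(G s - G r) /\<^sub>R (s - r) = - (G s ** ((E s - E r) /\<^sub>R (s - r)))" for s
    by (simp only: mm.scaleR_right diff) (simp add: scaleR_right_diff_distrib)
  ultimately show ?thesis
    unfolding has_vector_derivative_iff_tendsto_quotient by simp
qed

section \<open>Gronwall inequalities\<close>

lemma gronwall_derivative_bound:
  fixes y :: "real \<Rightarrow> 'a::real_inner"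
  assumes "s \<le> t"
    and der: "\<And>x. x \<in> {s..t} \<Longrightarrow> (y has_vector_derivative y' x) (at x)"
    and bound: "\<And>x. x \<in> {s..t} \<Longrightarrow> norm (y' x) \<le> L * norm (y x)"
  shows "norm (y t) \<le> exp (L * (t - s)) * norm (y s)"
proof -
  define g where "g x = exp (- 2 * L * (x - s)) * (y x \<bullet> y x)" for x
  have "g t \<le> g s"
  proof (rule DERIV_nonpos_imp_nonincreasing[OF \<open>s \<le> t\<close>])
    fix x assume "s \<le> x" "x \<le> t"
    then have x: "x \<in> {s..t}" by simp
    have "((\<lambda>x. y x \<bullet> y x) has_real_derivative 2 * (y x \<bullet> y' x)) (at x)"
      using bounded_bilinear.has_vector_derivative[OF bounded_bilinear_inner der[OF x] der[OF x]]
      by (simp add: has_real_derivative_iff_has_vector_derivative inner_commute)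
    then have "(g has_real_derivative
        2 * exp (- 2 * L * (x - s)) * (y x \<bullet> y' x - L * (y x \<bullet> y x))) (at x)"
      unfolding g_def by (auto intro!: derivative_eq_intros simp: algebra_simps)
    moreover have "y x \<bullet> y' x \<le> L * (y x \<bullet> y x)"
    proof -
      have "y x \<bullet> y' x \<le> norm (y x) * norm (y' x)"
        by (rule norm_cauchy_schwarz)
      also have "\<dots> \<le> norm (y x) * (L * norm (y x))"
        by (rule mult_left_mono[OF bound[OF x] norm_ge_zero])
      finally show ?thesis
        by (simp add: power2_norm_eq_inner[symmetric] power2_eq_square ac_simps)
    qed
    ultimately show "\<exists>d. (g has_real_derivative d) (at x) \<and> d \<le> 0"
      by (intro exI conjI) (auto intro: mult_nonneg_nonpos)
  qed
  have "(norm (y t))\<^sup>2 = exp (2 * L * (t - s)) * g t"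
    by (simp add: g_def power2_norm_eq_inner mult.assoc[symmetric] exp_add[symmetric])
  also have "\<dots> \<le> exp (2 * L * (t - s)) * g s"
    using \<open>g t \<le> g s\<close> by simp
  also have "\<dots> = exp (2 * L * (t - s)) * (norm (y s))\<^sup>2"
    by (simp add: g_def power2_norm_eq_inner)
  also have "\<dots> = (exp (L * (t - s)) * norm (y s))\<^sup>2"
    by (simp add: power_mult_distrib exp_double[symmetric] ac_simps)
  finally show ?thesis
    by (rule power2_le_imp_le) simp
qed

lemma gronwall_derivative_bound_abs:
  fixes y :: "real \<Rightarrow> 'a::real_inner"
  assumes der: "\<And>x. (y has_vector_derivative y' x) (at x)"
    and bound: "\<And>x. x \<in> closed_segment s t \<Longrightarrow> norm (y' x) \<le> L * norm (y x)"
  shows "norm (y t) \<le> exp (L * \<bar>t - s\<bar>) * norm (y s)"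
proof (cases "s \<le> t")
  case True
  then show ?thesis
    using gronwall_derivative_bound[of s t y y' L] der bound by (simp add: closed_segment_eq_real_ivl)
next
  case False
  have "norm (y (- (- t))) \<le> exp (L * (- t - - s)) * norm (y (- (- s)))"
  proof (rule gronwall_derivative_bound[where y = "\<lambda>x. y (- x)" and y' = "\<lambda>x. - y' (- x)"])
    show "- s \<le> - t"
      using False by simp
    show "((\<lambda>x. y (- x)) has_vector_derivative - y' (- x)) (at x)" for x
      using vector_diff_chain_at[OF has_vector_derivative_minus[OF has_vector_derivative_id] der]
      by (simp add: o_def)
    show "norm (- y' (- x)) \<le> L * norm (y (- x))" if "x \<in> {- s..- t}" for x
      using bound[of "- x"] that False by (simp add: closed_segment_eq_real_ivl)
  qed
  then show ?thesis
    using False by simp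
qed

lemma gronwall_integral_bound:
  fixes u :: "real \<Rightarrow> real"
  assumes "s \<le> t" "0 \<le> c" and cont: "continuous_on {s..t} u"
    and ineq: "\<And>\<tau>. \<tau> \<in> {s..t} \<Longrightarrow> u \<tau> \<le> C + c * integral {s..\<tau>} u"
  shows "u t \<le> C * exp (c * (t - s))"
proof -
  define I where "I \<tau> = integral {s..\<tau>} u" for \<tau>
  define g where "g \<tau> = exp (- c * (\<tau> - s)) * (C + c * I \<tau>)" for \<tau>
  have dI: "(I has_real_derivative u \<tau>) (at \<tau> within {s..t})" if "\<tau> \<in> {s..t}" for \<tau>
    unfolding I_def by (rule integral_has_real_derivative[OF cont that])
  have "g t \<le> g s"
  proof (rule DERIV_nonpos_imp_decreasing_open[OF \<open>s \<le> t\<close>])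
    fix \<tau> assume \<tau>: "s < \<tau>" "\<tau> < t"
    have "(I has_real_derivative u \<tau>) (at \<tau>)"
      using dI[of \<tau>] \<tau> at_within_Icc_at[of s \<tau> t] by simp
    then have "(g has_real_derivative exp (- c * (\<tau> - s)) * (c * (u \<tau> - (C + c * I \<tau>)))) (at \<tau>)"
      unfolding g_def by (auto intro!: derivative_eq_intros simp: algebra_simps)
    moreover have "c * (u \<tau> - (C + c * I \<tau>)) \<le> 0"
      using ineq[of \<tau>] \<tau> \<open>0 \<le> c\<close> by (simp add: I_def mult_nonneg_nonpos)
    ultimately show "\<exists>d. (g has_real_derivative d) (at \<tau>) \<and> d \<le> 0"
      by (intro exI[of _ "exp (- c * (\<tau> - s)) * (c * (u \<tau> - (C + c * I \<tau>)))"] conjI)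
        (auto intro: mult_nonneg_nonpos)
  next
    have "continuous_on {s..t} I"
      using dI by (metis DERIV_continuous continuous_on_eq_continuous_within)
    then show "continuous_on {s..t} g"
      unfolding g_def by (intro continuous_intros)
  qed
  have "C + c * I t = exp (c * (t - s)) * g t"
    by (simp add: g_def mult.assoc[symmetric] exp_add[symmetric])
  also have "\<dots> \<le> exp (c * (t - s)) * g s"
    using \<open>g t \<le> g s\<close> by simp
  finally have "C + c * I t \<le> C * exp (c * (t - s))"
    by (simp add: g_def I_def mult.commute)
  then show ?thesis
    using ineq[of t] \<open>s \<le> t\<close> by (simp add: I_def)
qed

section \<open>Transition matrices\<close>

lemma transition_matrix_diag [simp]: "is_transition_matrix V Phi \<Longrightarrow> Phi s s = mat 1"
  by (simp add: is_transition_matrix_def)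

lemma transition_matrix_has_vector_derivative:
  "is_transition_matrix V Phi \<Longrightarrow> ((\<lambda>u. Phi u s) has_vector_derivative V t ** Phi t s) (at t)"
  by (simp add: is_transition_matrix_def)

lemma continuous_on_transition_matrix:
  assumes "is_transition_matrix V Phi"
  shows "continuous_on S (\<lambda>t. Phi t s)"
  using has_vector_derivative_continuous[OF transition_matrix_has_vector_derivative[OF assms]]
  by (simp add: continuous_at_imp_continuous_on)

lemma transition_matrix_cocycle:
  fixes V :: "real \<Rightarrow> real^'n^'n"
  assumes cont: "continuous_on UNIV V" and Phi: "is_transition_matrix V Phi"
  shows "Phi t r ** Phi r s = Phi t s"
proof -
  interpret mm: bounded_bilinear "(**) :: real^'n^'n \<Rightarrow> real^'n^'n \<Rightarrow> real^'n^'n"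
    by (rule bounded_bilinear_matrix_matrix_mult)
  define Y where "Y u = Phi u r ** Phi r s - Phi u s" for u
  have "(Y has_vector_derivative V u ** Y u) (at u)" for u
    unfolding Y_def
    using has_vector_derivative_diff[OF mm.bounded_linear_left[THEN bounded_linear.has_vector_derivative,
          OF transition_matrix_has_vector_derivative[OF Phi]] transition_matrix_has_vector_derivative[OF Phi]]
    by (simp add: mm.diff_right matrix_mul_assoc)
  moreover obtain L where "\<And>u X. u \<in> closed_segment r t \<Longrightarrow> norm (V u ** X) \<le> L * norm (X::real^'n^'n)"
    using matrix_mult_bound_on_compact[OF continuous_on_subset[OF cont subset_UNIV] compact_segment]
    by metis
  ultimately have "norm (Y t) \<le> exp (L * \<bar>t - r\<bar>) * norm (Y r)"
    by (intro gronwall_derivative_bound_abs) auto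
  moreover have "Y r = 0"
    using Phi by (simp add: Y_def)
  ultimately show ?thesis
    by (simp add: Y_def)
qed

lemma transition_matrix_has_vector_derivative_initial:
  fixes V :: "real \<Rightarrow> real^'n^'n"
  assumes cont: "continuous_on UNIV V" and Phi: "is_transition_matrix V Phi"
  shows "((\<lambda>s. Phi t s) has_vector_derivative - (Phi t r ** V r)) (at r)"
proof (rule has_vector_derivative_left_factor)
  show "Phi t s ** Phi s r = Phi t r" for s
    by (rule transition_matrix_cocycle[OF cont Phi])
  show "Phi r r = mat 1"
    using Phi by simp
  show "((\<lambda>s. Phi s r) has_vector_derivative V r) (at r)"
    using transition_matrix_has_vector_derivative[OF Phi, of r r] Phi by simp
  obtain L where "0 \<le> L"
    and L: "\<And>u X. u \<in> {min t r - 1..max t r + 1} \<Longrightarrow> norm (V u ** X) \<le> L * norm (X::real^'n^'n)"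
    using matrix_mult_bound_on_compact[OF continuous_on_subset[OF cont subset_UNIV] compact_Icc]
    by metis
  have "norm (Phi t s) \<le> exp (L * (\<bar>t - r\<bar> + 1)) * norm (mat 1 :: real^'n^'n)"
    if "dist s r < 1" for s
  proof -
    have "closed_segment s t \<subseteq> {min t r - 1..max t r + 1}"
      using that by (auto simp: closed_segment_eq_real_ivl dist_real_def)
    then have "norm (Phi t s) \<le> exp (L * \<bar>t - s\<bar>) * norm (Phi s s)"
      using L by (intro gronwall_derivative_bound_abs[where y' = "\<lambda>u. V u ** Phi u s"]
          transition_matrix_has_vector_derivative[OF Phi]) auto
    also have "\<dots> \<le> exp (L * (\<bar>t - r\<bar> + 1)) * norm (mat 1 :: real^'n^'n)"
      unfolding transition_matrix_diag[OF Phi] using that \<open>0 \<le> L\<close>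
      by (intro mult_right_mono) (auto simp: dist_real_def intro!: mult_left_mono)
    finally show ?thesis .
  qed
  then show "Bfun (\<lambda>s. Phi t s) (at r)"
    by (intro BfunI) (auto simp: eventually_at intro!: exI[of _ 1])
qed

lemma is_transition_matrix_reflect:
  assumes "is_transition_matrix V Phi"
  shows "is_transition_matrix (\<lambda>t. - V (- t)) (\<lambda>t s. Phi (- t) (- s))"
  unfolding is_transition_matrix_def
proof (intro conjI allI)
  show "Phi (- s) (- s) = mat 1" for s
    using assms by simp
  show "((\<lambda>u. Phi (- u) (- s)) has_vector_derivative (- V (- t)) ** Phi (- t) (- s)) (at t)" for t s
    using vector_diff_chain_at[OF has_vector_derivative_minus[OF has_vector_derivative_id]
        transition_matrix_has_vector_derivative[OF assms]]
    by (simp add: o_def bounded_bilinear.minus_left[OF bounded_bilinear_matrix_matrix_mult])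
qed

section \<open>Perturbed systems\<close>

lemma nonuniform_bounded_growth_nonneg:
  assumes "nonuniform_bounded_growth Phi K0 a \<epsilon>"
  shows "0 \<le> K0"
proof -
  have "opnorm (Phi 0 0) \<le> K0"
    using assms[unfolded nonuniform_bounded_growth_def, rule_format, of 0 0] by simp
  then show ?thesis
    by (rule order_trans[OF opnorm_nonneg])
qed

lemma nonuniform_bounded_growth_reflect:
  assumes "nonuniform_bounded_growth Phi K0 a \<epsilon>"
  shows "nonuniform_bounded_growth (\<lambda>t s. Phi (- t) (- s)) K0 a \<epsilon>"
  unfolding nonuniform_bounded_growth_def
proof (intro allI)
  fix t \<tau> :: real
  have "\<bar>- t - - \<tau>\<bar> = \<bar>t - \<tau>\<bar>"
    by arith
  then show "opnorm (Phi (- t) (- \<tau>)) \<le> K0 * exp (\<epsilon> * \<bar>\<tau>\<bar>) * exp (a * \<bar>t - \<tau>\<bar>)"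
    using assms[unfolded nonuniform_bounded_growth_def, rule_format, of "- t" "- \<tau>"] by simp
qed

lemma variation_of_constants:
  fixes A P :: "real \<Rightarrow> real^'n^'n"
  assumes contA: "continuous_on UNIV A" and PhiA: "is_transition_matrix A PhiA"
    and PhiT: "is_transition_matrix (\<lambda>t. A t + P t) PhiT" and "s \<le> t"
  shows "((\<lambda>r. PhiA t r ** P r ** PhiT r s) has_integral PhiT t s - PhiA t s) {s..t}"
proof -
  have deriv: "((\<lambda>r. PhiA t r ** PhiT r s) has_vector_derivative PhiA t r ** P r ** PhiT r s) (at r)"
    for r
  proof -
    have "PhiA t r ** ((A r + P r) ** PhiT r s) = PhiA t r ** A r ** PhiT r s + PhiA t r ** P r ** PhiT r s"
      using bounded_bilinear.add_left[OF bounded_bilinear_matrix_matrix_mult, of "A r" "P r" "PhiT r s"]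
      by (simp add: matrix_add_ldistrib matrix_mul_assoc)
    moreover have "- (PhiA t r ** A r) ** PhiT r s = - (PhiA t r ** A r ** PhiT r s)"
      by (rule bounded_bilinear.minus_left[OF bounded_bilinear_matrix_matrix_mult])
    ultimately have "PhiA t r ** ((A r + P r) ** PhiT r s) + - (PhiA t r ** A r) ** PhiT r s
        = PhiA t r ** P r ** PhiT r s"
      by simp
    moreover have "((\<lambda>r. PhiA t r ** PhiT r s) has_vector_derivative
        PhiA t r ** ((A r + P r) ** PhiT r s) + - (PhiA t r ** A r) ** PhiT r s) (at r)"
      by (rule bounded_bilinear.has_vector_derivative[OF bounded_bilinear_matrix_matrix_mult
            transition_matrix_has_vector_derivative_initial[OF contA PhiA]
            transition_matrix_has_vector_derivative[OF PhiT]])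
    ultimately show ?thesis
      by simp
  qed
  have "((\<lambda>r. PhiA t r ** P r ** PhiT r s) has_integral
      PhiA t t ** PhiT t s - PhiA t s ** PhiT s s) {s..t}"
    by (rule fundamental_theorem_of_calculus[OF \<open>s \<le> t\<close>, where f = "\<lambda>r. PhiA t r ** PhiT r s"])
      (rule has_vector_derivative_at_within[OF deriv])
  then show ?thesis
    by (simp add: transition_matrix_diag[OF PhiA] transition_matrix_diag[OF PhiT])
qed

lemma perturbed_transition_matrix_integral_inequality:
  fixes A P :: "real \<Rightarrow> real^'n^'n"
  assumes contA: "continuous_on UNIV A" and PhiA: "is_transition_matrix A PhiA"
    and PhiT: "is_transition_matrix (\<lambda>t. A t + P t) PhiT"
    and growth: "nonuniform_bounded_growth PhiA K0 a \<epsilon>"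
    and Pbound: "\<And>t. opnorm (P t) \<le> PP * exp (- p * \<bar>t\<bar>)"
    and "\<epsilon> \<le> p" and "s \<le> t"
  shows "opnorm (PhiT t s) \<le> K0 * exp (\<epsilon> * \<bar>s\<bar>) * exp (a * (t - s))
           + K0 * PP * integral {s..t} (\<lambda>r. exp (a * (t - r)) * opnorm (PhiT r s))"
proof -
  have bound_PhiA: "opnorm (PhiA t \<tau>) \<le> K0 * exp (\<epsilon> * \<bar>\<tau>\<bar>) * exp (a * \<bar>t - \<tau>\<bar>)" for t \<tau>
    using growth unfolding nonuniform_bounded_growth_def by blast
  have "0 \<le> K0 * PP"
    using nonuniform_bounded_growth_nonneg[OF growth] Pbound[of 0] opnorm_nonneg[of "P 0"] by simp
  have kernel: "opnorm (PhiA t r) * opnorm (P r) \<le> K0 * PP * exp (a * (t - r))" if "r \<le> t" for r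
  proof -
    have "opnorm (PhiA t r) * opnorm (P r)
        \<le> (K0 * exp (\<epsilon> * \<bar>r\<bar>) * exp (a * (t - r))) * (PP * exp (- p * \<bar>r\<bar>))"
      using bound_PhiA[of t r] Pbound[of r] that
      by (intro mult_mono opnorm_nonneg) (auto intro: order_trans[OF opnorm_nonneg])
    also have "\<dots> = K0 * PP * exp (a * (t - r)) * exp ((\<epsilon> - p) * \<bar>r\<bar>)"
      by (simp add: algebra_simps flip: exp_add)
    also have "\<dots> \<le> K0 * PP * exp (a * (t - r))"
      using \<open>\<epsilon> \<le> p\<close> \<open>0 \<le> K0 * PP\<close> by (intro mult_left_le) (auto simp: mult_nonpos_nonneg)
    finally show ?thesis .
  qed
  have "opnorm (PhiT t s - PhiA t s)
      \<le> integral {s..t} (\<lambda>r. K0 * PP * (exp (a * (t - r)) * opnorm (PhiT r s)))"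
  proof (rule opnorm_integral_le[OF variation_of_constants[OF contA PhiA PhiT \<open>s \<le> t\<close>]])
    show "(\<lambda>r. K0 * PP * (exp (a * (t - r)) * opnorm (PhiT r s))) integrable_on {s..t}"
      by (intro integrable_continuous_real continuous_intros continuous_on_opnorm
          continuous_on_transition_matrix[OF PhiT])
    show "opnorm (PhiA t r ** P r ** PhiT r s) \<le> K0 * PP * (exp (a * (t - r)) * opnorm (PhiT r s))"
      if "r \<in> {s..t}" for r
    proof -
      have "opnorm (PhiA t r ** P r ** PhiT r s) \<le> opnorm (PhiA t r ** P r) * opnorm (PhiT r s)"
        by (rule opnorm_matrix_mult_le)
      also have "\<dots> \<le> opnorm (PhiA t r) * opnorm (P r) * opnorm (PhiT r s)"
        by (intro mult_right_mono opnorm_matrix_mult_le opnorm_nonneg)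
      also have "\<dots> \<le> K0 * PP * exp (a * (t - r)) * opnorm (PhiT r s)"
        using kernel[of r] that by (intro mult_right_mono opnorm_nonneg) auto
      finally show ?thesis
        by (simp add: ac_simps)
    qed
  qed
  moreover have "opnorm (PhiT t s) \<le> opnorm (PhiA t s) + opnorm (PhiT t s - PhiA t s)"
    using opnorm_triangle[of "PhiA t s" "PhiT t s - PhiA t s"] by simp
  moreover have "opnorm (PhiA t s) \<le> K0 * exp (\<epsilon> * \<bar>s\<bar>) * exp (a * (t - s))"
    using bound_PhiA[of t s] \<open>s \<le> t\<close> by simp
  ultimately show ?thesis
    by (simp add: mult.assoc)
qed

lemma perturbed_transition_matrix_growth_forward:
  fixes A P :: "real \<Rightarrow> real^'n^'n"
  assumes contA: "continuous_on UNIV A" and PhiA: "is_transition_matrix A PhiA"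
    and PhiT: "is_transition_matrix (\<lambda>t. A t + P t) PhiT"
    and growth: "nonuniform_bounded_growth PhiA K0 a \<epsilon>"
    and Pbound: "\<And>t. opnorm (P t) \<le> PP * exp (- p * \<bar>t\<bar>)"
    and "\<epsilon> \<le> p" and "s \<le> t"
  shows "opnorm (PhiT t s) \<le> K0 * exp ((a + K0 * PP) * (t - s) + \<epsilon> * \<bar>s\<bar>)"
proof -
  define u where "u r = exp (- a * (r - s)) * opnorm (PhiT r s)" for r
  have "u t \<le> K0 * exp (\<epsilon> * \<bar>s\<bar>) * exp (K0 * PP * (t - s))"
  proof (rule gronwall_integral_bound[OF \<open>s \<le> t\<close>])
    show "0 \<le> K0 * PP"
      using nonuniform_bounded_growth_nonneg[OF growth] Pbound[of 0] opnorm_nonneg[of "P 0"] by simp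
    show "continuous_on {s..t} u"
      unfolding u_def by (intro continuous_intros continuous_on_opnorm continuous_on_transition_matrix[OF PhiT])
    show "u \<tau> \<le> K0 * exp (\<epsilon> * \<bar>s\<bar>) + K0 * PP * integral {s..\<tau>} u" if "\<tau> \<in> {s..t}" for \<tau>
    proof -
      define R where "R = K0 * exp (\<epsilon> * \<bar>s\<bar>) + K0 * PP * integral {s..\<tau>} u"
      have exponent: "a * (\<tau> - s) + - a * (r - s) = a * (\<tau> - r)" for r
        by (simp add: algebra_simps)
      have "exp (a * (\<tau> - s)) * u r = exp (a * (\<tau> - r)) * opnorm (PhiT r s)" for r
        unfolding u_def mult.assoc[symmetric] exp_add[symmetric] exponent ..
      then have "(\<lambda>r. exp (a * (\<tau> - r)) * opnorm (PhiT r s)) = (\<lambda>r. exp (a * (\<tau> - s)) * u r)"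
        by simp
      then have "opnorm (PhiT \<tau> s) \<le> exp (a * (\<tau> - s)) * R"
        using perturbed_transition_matrix_integral_inequality[OF contA PhiA PhiT growth Pbound
            \<open>\<epsilon> \<le> p\<close>, of s \<tau>] that
        by (simp add: R_def algebra_simps)
      then have "u \<tau> \<le> exp (- a * (\<tau> - s)) * (exp (a * (\<tau> - s)) * R)"
        unfolding u_def by (rule mult_left_mono) simp
      also have "\<dots> = R"
        by (simp add: mult.assoc[symmetric] flip: exp_add)
      finally show ?thesis
        unfolding R_def .
    qed
  qed
  have "opnorm (PhiT t s) = exp (a * (t - s)) * u t"
    by (simp add: u_def mult.assoc[symmetric] flip: exp_add)
  also have "\<dots> \<le> exp (a * (t - s)) * (K0 * exp (\<epsilon> * \<bar>s\<bar>) * exp (K0 * PP * (t - s)))"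
    using \<open>u t \<le> _\<close> by simp
  also have "\<dots> = K0 * exp ((a + K0 * PP) * (t - s) + \<epsilon> * \<bar>s\<bar>)"
    by (simp add: algebra_simps flip: exp_add)
  finally show ?thesis .
qed

lemma perturbed_transition_matrix_growth_backward:
  fixes A P :: "real \<Rightarrow> real^'n^'n"
  assumes contA: "continuous_on UNIV A" and PhiA: "is_transition_matrix A PhiA"
    and PhiT: "is_transition_matrix (\<lambda>t. A t + P t) PhiT"
    and growth: "nonuniform_bounded_growth PhiA K0 a \<epsilon>"
    and Pbound: "\<And>t. opnorm (P t) \<le> PP * exp (- p * \<bar>t\<bar>)"
    and "\<epsilon> \<le> p" and "t \<le> s"
  shows "opnorm (PhiT t s) \<le> K0 * exp ((a + K0 * PP) * (s - t) + \<epsilon> * \<bar>s\<bar>)"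
proof -
  have "opnorm (PhiT (- (- t)) (- (- s))) \<le> K0 * exp ((a + K0 * PP) * (- t - - s) + \<epsilon> * \<bar>- s\<bar>)"
  proof (rule perturbed_transition_matrix_growth_forward[where A = "\<lambda>t. - A (- t)" and P = "\<lambda>t. - P (- t)"])
    show "continuous_on UNIV (\<lambda>t. - A (- t))"
      by (intro continuous_on_minus continuous_on_compose2[OF contA]) (auto intro: continuous_intros)
    show "is_transition_matrix (\<lambda>t. - A (- t)) (\<lambda>t s. PhiA (- t) (- s))"
      by (rule is_transition_matrix_reflect[OF PhiA])
    show "is_transition_matrix (\<lambda>t. - A (- t) + - P (- t)) (\<lambda>t s. PhiT (- t) (- s))"
      using is_transition_matrix_reflect[OF PhiT] by (simp add: add.commute)
    show "nonuniform_bounded_growth (\<lambda>t s. PhiA (- t) (- s)) K0 a \<epsilon>"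
      by (rule nonuniform_bounded_growth_reflect[OF growth])
    show "opnorm (- P (- t)) \<le> PP * exp (- p * \<bar>t\<bar>)" for t
      using Pbound[of "- t"] by (simp add: opnorm_minus)
  qed (use \<open>\<epsilon> \<le> p\<close> \<open>t \<le> s\<close> in auto)
  then show ?thesis
    by simp
qed

theorem mainTheorem1:
  fixes A P :: "real \<Rightarrow> real^'n^'n"
    and PhiA PhiT :: "real \<Rightarrow> real \<Rightarrow> real^'n^'n"
    and K0 a \<epsilon> PP p :: real
  assumes contA: "continuous_on UNIV A"
    and contP: "continuous_on UNIV P"
    and PhiA: "is_transition_matrix A PhiA"
    and PhiT: "is_transition_matrix (\<lambda>t. A t + P t) PhiT"
    and K0: "K0 > 0" and a: "a > 0" and eps: "\<epsilon> > 0"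
    and growth: "nonuniform_bounded_growth PhiA K0 a \<epsilon>"
    and PP: "PP > 0" and p: "p > 0"
    and Pbound: "\<forall>t. opnorm (P t) \<le> PP * exp (- p * \<bar>t\<bar>)"
    and peps: "p > \<epsilon>"
  shows "\<forall>t1 t2. opnorm (PhiT t2 t1) \<le> K0 * exp ((a + K0 * PP) * \<bar>t2 - t1\<bar> + \<epsilon> * \<bar>t1\<bar>)"
proof (intro allI)
  fix t1 t2 :: real
  have Pbound': "opnorm (P t) \<le> PP * exp (- p * \<bar>t\<bar>)" for t
    using Pbound by blast
  show "opnorm (PhiT t2 t1) \<le> K0 * exp ((a + K0 * PP) * \<bar>t2 - t1\<bar> + \<epsilon> * \<bar>t1\<bar>)"
    using perturbed_transition_matrix_growth_forward[OF contA PhiA PhiT growth Pbound', of t1 t2]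
      perturbed_transition_matrix_growth_backward[OF contA PhiA PhiT growth Pbound', of t2 t1] peps
    by (cases "t1 \<le> t2") simp_all
qed

end
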